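(* Let $p_1\neq p_2$ be points of $\beta\mathbb{N}\setminus\mathbb{N}$. Then the closed subspace $X=\{g\in C(\beta\mathbb{N}): g(p_1)=g(p_2)\}$ of $C(\beta\mathbb{N})$ fails the ball fixed point property.
   Context: $\beta\mathbb{N}$ is the Čech–Stone compactification of $\mathbb{N}$. $C(K)$ is the real Banach space of continuous functions on a compact space $K$ with the sup norm. A real Banach space $X$ has the ball fixed point property (BFPP) if every nonexpansive map $T\colon B_X\to B_X$ (i.e. $\|Tx-Ty\|\le\|x-y\|$) has a fixed point, where $B_X$ is the closed unit ball. *)

theory Defs
  imports "HOL-Analysis.Analysis"
begin

text \<open>The type 'k (with its topology) together with e is a Stone-Cech compactification
  of the discrete space of naturals: compact Hausdorff, e is an embedding of discrete nat
  (injective with isolated image points), the image is dense, and every bounded real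
  sequence extends to a continuous function on 'k.\<close>
definition stone_cech_nat :: "(nat \<Rightarrow> 'k::t2_space) \<Rightarrow> bool" where
  "stone_cech_nat e \<longleftrightarrow>
     compact (UNIV :: 'k set) \<and> inj e \<and> (\<forall>n. open {e n}) \<and>
     closure (range e) = UNIV \<and>
     (\<forall>f :: nat \<Rightarrow> real. bounded (range f) \<longrightarrow>
        (\<exists>g. continuous_on UNIV g \<and> (\<forall>n. g (e n) = f n)))"

definition bfpp :: "'a::real_normed_vector set \<Rightarrow> bool" where
  "bfpp S \<longleftrightarrow>
     (\<forall>T. (\<forall>x\<in>S \<inter> cball 0 1. T x \<in> S \<inter> cball 0 1) \<and>
          (\<forall>x\<in>S \<inter> cball 0 1. \<forall>y\<in>S \<inter> cball 0 1. norm (T x - T y) \<le> norm (x - y))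
          \<longrightarrow> (\<exists>x\<in>S \<inter> cball 0 1. T x = x))"

end

theory Submission
  imports Defs
begin

text \<open>Extending \<open>n \<mapsto> 1/(n+1)\<close> gives a continuous weight \<open>w : \<beta>\<nat> \<rightarrow> [0,1]\<close> that is
  positive on \<open>\<nat>\<close> and vanishes on the remainder; choose also \<open>s \<in> C(\<beta>\<nat>)\<close> with
  \<open>s(p\<^sub>1) = 1\<close>, \<open>s(p\<^sub>2) = 0\<close>. The map \<open>T g = (1 - w) g + w s\<close> is nonexpansive, maps the
  unit ball into itself, and leaves the values at \<open>p\<^sub>1, p\<^sub>2\<close> untouched, so it maps the
  ball of \<open>X\<close> into itself. A fixed point of \<open>T\<close> agrees with \<open>s\<close> on \<open>\<nat>\<close>, hence
  everywhere by density, which is impossible in \<open>X\<close> since \<open>s(p\<^sub>1) \<noteq> s(p\<^sub>2)\<close>.\<close>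

lemma abs_convex_comb_le:
  fixes u a b c :: real
  assumes "u \<in> {0..1}" "\<bar>a\<bar> \<le> c" "\<bar>b\<bar> \<le> c"
  shows "\<bar>(1 - u) * a + u * b\<bar> \<le> c"
proof -
  have "\<bar>(1 - u) * a + u * b\<bar> \<le> (1 - u) * \<bar>a\<bar> + u * \<bar>b\<bar>"
    using assms(1) abs_triangle_ineq[of "(1 - u) * a" "u * b"] by (simp add: abs_mult)
  also have "\<dots> \<le> c"
    using assms by (intro convex_bound_le) auto
  finally show ?thesis .
qed

lemma closure_tail_of_dense_sequence:
  fixes e :: "nat \<Rightarrow> 'a::t1_space"
  assumes "closure (range e) = UNIV" "p \<notin> range e"
  shows "p \<in> closure (e ` {N..})"
proof -
  have "{..<N} \<union> {N..} = (UNIV :: nat set)"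
    by auto
  then have "range e = e ` {..<N} \<union> e ` {N..}"
    by (metis image_Un)
  then have "closure (range e) = e ` {..<N} \<union> closure (e ` {N..})"
    by (simp add: closure_closed finite_imp_closed)
  then show ?thesis
    using assms by auto
qed

lemma continuous_at_remainder_eq_limit:
  fixes e :: "nat \<Rightarrow> 'a::t1_space" and f :: "'a \<Rightarrow> 'b::metric_space"
  assumes "closure (range e) = UNIV" "p \<notin> range e"
    and "continuous_on UNIV f" "(\<lambda>n. f (e n)) \<longlonglongrightarrow> L"
  shows "f p = L"
proof -
  have close: "dist L (f p) \<le> \<epsilon>" if "\<epsilon> > 0" for \<epsilon>
  proof -
    obtain N where N: "\<And>n. n \<ge> N \<Longrightarrow> dist (f (e n)) L < \<epsilon>"
      using assms(4) \<open>\<epsilon> > 0\<close> unfolding lim_sequentially by blast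
    have "f (e n) \<in> cball L \<epsilon>" if "n \<ge> N" for n
      using N[OF that] by (simp add: dist_commute)
    then have "f ` e ` {N..} \<subseteq> cball L \<epsilon>"
      by auto
    then have "f ` closure (e ` {N..}) \<subseteq> cball L \<epsilon>"
      by (rule image_closure_subset[OF continuous_on_subset[OF assms(3) subset_UNIV] closed_cball])
    then show ?thesis
      using closure_tail_of_dense_sequence[OF assms(1,2), of N] by (meson image_subset_iff mem_cball)
  qed
  have "dist L (f p) \<le> 0"
    by (rule field_le_epsilon) (simp add: close)
  then show ?thesis
    by simp
qed

lemma open_subset_closure_of_dense_sequence:
  assumes "closure (range e) = UNIV" "open U"
  shows "U \<subseteq> closure (e ` {n. e n \<in> U})"
proof -
  have "U \<inter> range e = e ` {n. e n \<in> U}"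
    by auto
  then show ?thesis
    using open_Int_closure_subset[OF assms(2), of "range e"] assms(1) by simp
qed

lemma stone_cech_nat_dense: "stone_cech_nat e \<Longrightarrow> closure (range e) = UNIV"
  unfolding stone_cech_nat_def by blast

lemma stone_cech_nat_extension_into:
  fixes e :: "nat \<Rightarrow> 'k::t2_space" and f :: "nat \<Rightarrow> real"
  assumes "stone_cech_nat e" "closed C" "bounded C" "\<And>n. f n \<in> C"
  obtains g where "continuous_on UNIV g" "\<And>n. g (e n) = f n" "\<And>t. g t \<in> C"
proof -
  have "range f \<subseteq> C"
    using assms(4) by auto
  then have "bounded (range f)"
    by (rule bounded_subset[OF assms(3)])
  then obtain g where g: "continuous_on UNIV g" "\<And>n. g (e n) = f n"
    using assms(1) unfolding stone_cech_nat_def by blast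
  have "g ` range e \<subseteq> C"
    using \<open>range f \<subseteq> C\<close> by (auto simp: g(2))
  then have "g ` closure (range e) \<subseteq> C"
    by (rule image_closure_subset[OF continuous_on_subset[OF g(1) subset_UNIV] assms(2)])
  then have "g t \<in> C" for t
    unfolding stone_cech_nat_dense[OF assms(1)] by blast
  with g show thesis
    by (rule that)
qed

lemma stone_cech_nat_weight:
  fixes e :: "nat \<Rightarrow> 'k::t2_space"
  assumes "stone_cech_nat e"
  obtains w :: "'k \<Rightarrow> real" where "continuous_on UNIV w" "\<And>t. w t \<in> {0..1}" "\<And>n. w (e n) > 0"
    "\<And>p. p \<notin> range e \<Longrightarrow> w p = 0"
proof -
  have in_unit_interval: "inverse (real (Suc n)) \<in> {0..1}" for n
    by (simp add: inverse_le_1_iff)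
  obtain w where w: "continuous_on UNIV w" "\<And>n. w (e n) = inverse (real (Suc n))"
    "\<And>t. w t \<in> {0..1}"
    using stone_cech_nat_extension_into[where f = "\<lambda>n. inverse (real (Suc n))",
        OF assms closed_atLeastAtMost compact_imp_bounded[OF compact_Icc] in_unit_interval]
    by metis
  have "(\<lambda>n. w (e n)) \<longlonglongrightarrow> 0"
    unfolding w(2) by (rule LIMSEQ_inverse_real_of_nat)
  then have vanishing: "w p = 0" if "p \<notin> range e" for p
    by (rule continuous_at_remainder_eq_limit[OF stone_cech_nat_dense[OF assms] that w(1)])
  have "w (e n) > 0" for n
    by (simp add: w(2))
  then show thesis
    by (rule that[OF w(1,3) _ vanishing])
qed

lemma stone_cech_nat_separating:
  fixes e :: "nat \<Rightarrow> 'k::t2_space" and p1 p2 :: 'k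
  assumes "stone_cech_nat e" "p1 \<noteq> p2"
  obtains s :: "'k \<Rightarrow> real" where "continuous_on UNIV s" "\<And>t. s t \<in> {0..1}" "s p1 = 1" "s p2 = 0"
proof -
  obtain U1 U2 where U: "open U1" "open U2" "p1 \<in> U1" "p2 \<in> U2" "U1 \<inter> U2 = {}"
    using hausdorff[OF assms(2)] by blast
  define f :: "nat \<Rightarrow> real" where "f n = (if e n \<in> U1 then 1 else 0)" for n
  have "f n \<in> {0..1}" for n
    by (simp add: f_def)
  then obtain s where s: "continuous_on UNIV s" "\<And>n. s (e n) = f n" "\<And>t. s t \<in> {0..1}"
    using stone_cech_nat_extension_into[OF assms(1) closed_atLeastAtMost compact_imp_bounded[OF compact_Icc]]
    by blast
  have dense: "closure (range e) = UNIV"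
    using stone_cech_nat_dense[OF assms(1)] .
  have const_on_closure: "s x = c"
    if "x \<in> closure (e ` {n. e n \<in> U})" "\<And>n. e n \<in> U \<Longrightarrow> s (e n) = c" for x U c
    using continuous_on_subset[OF s(1) subset_UNIV] _ that(1)
    by (rule continuous_constant_on_closure) (auto simp: that(2))
  have "p1 \<in> closure (e ` {n. e n \<in> U1})"
    using open_subset_closure_of_dense_sequence[OF dense U(1)] U(3) by blast
  then have "s p1 = 1"
    by (rule const_on_closure) (simp add: s(2) f_def)
  have "p2 \<in> closure (e ` {n. e n \<in> U2})"
    using open_subset_closure_of_dense_sequence[OF dense U(2)] U(4) by blast
  then have "s p2 = 0"
    by (rule const_on_closure) (use U(5) in \<open>auto simp: s(2) f_def\<close>)
  with \<open>s p1 = 1\<close> show thesis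
    by (rule that[OF s(1,3)])
qed

definition pull_towards ::
    "('a::topological_space \<Rightarrow> real) \<Rightarrow> ('a \<Rightarrow> real) \<Rightarrow> ('a \<Rightarrow>\<^sub>C real) \<Rightarrow> ('a \<Rightarrow>\<^sub>C real)" where
  "pull_towards w s g = Bcontfun (\<lambda>t. (1 - w t) * g t + w t * s t)"

context
  fixes w s :: "'a::topological_space \<Rightarrow> real"
  assumes continuous_w: "continuous_on UNIV w" and continuous_s: "continuous_on UNIV s"
    and w_range: "\<And>t. w t \<in> {0..1}" and s_bound: "\<And>t. \<bar>s t\<bar> \<le> 1"
begin

lemma pull_towards_apply:
  "apply_bcontfun (pull_towards w s g) t = (1 - w t) * g t + w t * s t"
proof -
  have "(\<lambda>t. (1 - w t) * g t + w t * s t) \<in> bcontfun"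
  proof (rule bcontfun_normI)
    show "continuous_on UNIV (\<lambda>t. (1 - w t) * g t + w t * s t)"
      by (intro continuous_intros continuous_w continuous_s continuous_on_apply_bcontfun)
    show "norm ((1 - w t) * g t + w t * s t) \<le> norm g + 1" for t
      using norm_bounded[of g t] s_bound[of t]
      by (simp only: real_norm_def) (intro abs_convex_comb_le w_range; simp)
  qed
  then show ?thesis
    unfolding pull_towards_def by (simp add: Bcontfun_inverse)
qed

lemma norm_pull_towards_le_1:
  assumes "norm g \<le> 1"
  shows "norm (pull_towards w s g) \<le> 1"
proof (rule norm_bound)
  fix t
  have "\<bar>g t\<bar> \<le> 1"
    using norm_bounded[of g t] assms by simp
  then show "norm (apply_bcontfun (pull_towards w s g) t) \<le> 1"
    using s_bound[of t] w_range[of t] by (simp add: pull_towards_apply abs_convex_comb_le)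
qed

lemma pull_towards_nonexpansive:
  "norm (pull_towards w s f - pull_towards w s g) \<le> norm (f - g)"
proof (rule norm_bound)
  fix t
  have "apply_bcontfun (pull_towards w s f - pull_towards w s g) t = (1 - w t) * (f t - g t)"
    by (simp add: pull_towards_apply algebra_simps)
  then have "norm (apply_bcontfun (pull_towards w s f - pull_towards w s g) t)
      = (1 - w t) * \<bar>f t - g t\<bar>"
    using w_range[of t] by (simp add: abs_mult)
  also have "\<dots> \<le> \<bar>f t - g t\<bar>"
    using w_range[of t] by (simp add: mult_left_le_one_le)
  also have "\<dots> \<le> norm (f - g)"
    using norm_bounded[of "f - g" t] by simp
  finally show "norm (apply_bcontfun (pull_towards w s f - pull_towards w s g) t) \<le> norm (f - g)" .
qed

lemma pull_towards_fixpoint: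
  assumes "pull_towards w s g = g" "w t \<noteq> 0"
  shows "g t = s t"
proof -
  have "w t * (s t - g t) = 0"
    using arg_cong[OF assms(1), of "\<lambda>h. apply_bcontfun h t"]
    by (simp add: pull_towards_apply algebra_simps)
  then show ?thesis
    using assms(2) by simp
qed

end

lemma not_bfpp_bcontfun_eq_at_points:
  fixes w s :: "'a::topological_space \<Rightarrow> real"
  assumes "continuous_on UNIV w" "continuous_on UNIV s" "\<And>t. w t \<in> {0..1}" "\<And>t. \<bar>s t\<bar> \<le> 1"
    and "closure {t. w t \<noteq> 0} = UNIV" "w p1 = 0" "w p2 = 0" "s p1 \<noteq> s p2"
  shows "\<not> bfpp {g :: 'a \<Rightarrow>\<^sub>C real. apply_bcontfun g p1 = apply_bcontfun g p2}"
    (is "\<not> bfpp ?X")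
proof
  let ?T = "pull_towards w s"
  assume "bfpp ?X"
  then have "(\<forall>g\<in>?X \<inter> cball 0 1. ?T g \<in> ?X \<inter> cball 0 1) \<and>
      (\<forall>f\<in>?X \<inter> cball 0 1. \<forall>g\<in>?X \<inter> cball 0 1. norm (?T f - ?T g) \<le> norm (f - g))
      \<longrightarrow> (\<exists>g\<in>?X \<inter> cball 0 1. ?T g = g)"
    unfolding bfpp_def by (rule spec)
  moreover have "?T g \<in> ?X \<inter> cball 0 1" if "g \<in> ?X \<inter> cball 0 1" for g
    using that norm_pull_towards_le_1[OF assms(1-4)] by (simp add: pull_towards_apply[OF assms(1-4)] assms(6,7))
  ultimately obtain g where g: "g \<in> ?X" "?T g = g"
    using pull_towards_nonexpansive[OF assms(1-4)] by blast
  have continuous_diff: "continuous_on (closure {t. w t \<noteq> 0}) (\<lambda>t. g t - s t)"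
    using continuous_on_subset[OF assms(2)] by (intro continuous_on_diff) auto
  have diff_zero: "g t - s t = 0" for t
  proof (rule continuous_constant_on_closure[OF continuous_diff])
    show "g x - s x = 0" if "x \<in> {t. w t \<noteq> 0}" for x
      using pull_towards_fixpoint[OF assms(1-4) g(2)] that by simp
    show "t \<in> closure {t. w t \<noteq> 0}"
      unfolding assms(5) ..
  qed
  have "s p1 = s p2"
    using diff_zero[of p1] diff_zero[of p2] g(1) by simp
  with assms(8) show False ..
qed

theorem mainTheorem5:
  fixes e :: "nat \<Rightarrow> 'k::t2_space" and p1 p2 :: 'k
  assumes "stone_cech_nat e"
    and "p1 \<notin> range e" and "p2 \<notin> range e" and "p1 \<noteq> p2"
  shows "\<not> bfpp {g :: ('k \<Rightarrow>\<^sub>C real). apply_bcontfun g p1 = apply_bcontfun g p2}"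
proof -
  obtain w :: "'k \<Rightarrow> real" where w: "continuous_on UNIV w" "\<And>t. w t \<in> {0..1}" "\<And>n. w (e n) > 0"
    "\<And>p. p \<notin> range e \<Longrightarrow> w p = 0"
    using stone_cech_nat_weight[OF assms(1)] by blast
  obtain s :: "'k \<Rightarrow> real" where s: "continuous_on UNIV s" "\<And>t. s t \<in> {0..1}" "s p1 = 1" "s p2 = 0"
    using stone_cech_nat_separating[OF assms(1,4)] by blast
  have "w (e n) \<noteq> 0" for n
    using w(3)[of n] by simp
  then have "closure (range e) \<subseteq> closure {t. w t \<noteq> 0}"
    by (intro closure_mono) auto
  then have dense: "closure {t. w t \<noteq> 0} = UNIV"
    unfolding stone_cech_nat_dense[OF assms(1)] by blast
  have s_bound: "\<bar>s t\<bar> \<le> 1" for t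
    using s(2)[of t] by simp
  show ?thesis
    using s(3,4) by (intro not_bfpp_bcontfun_eq_at_points[OF w(1) s(1) w(2) s_bound dense
        w(4)[OF assms(2)] w(4)[OF assms(3)]]) simp
qed

end
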